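(* Let $\mathcal{V}$ be a finite vocabulary, fix a decoding context $c$, let $P(\cdot\mid c)$ be the base next-token distribution on $\mathcal{V}$, and let $t_1 := \arg\max_{t} P(t\mid c)$ be the base model's top token. Let $\mathcal{V}$ be partitioned into $n \ge 1$ buckets and let the required bucket be drawn uniformly at random from the $n$ buckets; let $t^\star$ denote the highest-$P(\cdot\mid c)$-probability token in the required bucket. For each possible required bucket, let $Q(\cdot\mid c)$ be any probability distribution on $\mathcal{V}$ satisfying $Q(t^\star\mid c) \ge Q(t\mid c)$ for all $t\in\mathcal{V}$ (so $t^\star$ is an argmax of $Q$). Define the per-token perplexity \[ \mathrm{PPL}(Q) := \exp\Bigl(\mathbb{E}\bigl[-\log Q(t_1\mid c)\bigr]\Bigr), \] where the expectation is over the uniformly random required bucket. Then \[ \mathrm{PPL}(Q) \;\ge\; 2^{(n-1)/n}. \]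
   Context: Logarithms are natural. The channel carries $\log_2 n$ bits per token; perplexity of the steganographic distribution $Q$ is evaluated on the base model's top token $t_1$. *)

theory Defs
  imports Complex_Main "HOL-Library.Extended_Real"
begin

(* Convention: - ln 0 = +infinity, so PPL = +infinity if some Q b t1 = 0. *)
definition PPL :: "nat \<Rightarrow> (nat \<Rightarrow> 'v \<Rightarrow> real) \<Rightarrow> 'v \<Rightarrow> ereal" where
  "PPL n Q t1 = (if \<exists>b<n. Q b t1 = 0 then \<infinity>
                 else ereal (exp ((\<Sum>b<n. - ln (Q b t1)) / real n)))"

end

theory Submission
  imports Defs
begin

text \<open>
  For every required bucket b not containing t1 we have t1 \<noteq> t*_b, so t1 and t*_b are two
  distinct tokens of which t*_b is at least as likely under Q_b; as their masses sum to at most 1,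
  Q_b(t1) \<le> 1/2 and the surprisal -ln Q_b(t1) is at least ln 2.  This happens for n - 1 of the n
  buckets, while the remaining one contributes a nonnegative surprisal, so the expected surprisal is
  at least ((n - 1)/n) ln 2.
\<close>

lemma prob_le_one:
  fixes q :: "'a::finite \<Rightarrow> real"
  assumes "\<And>x. q x \<ge> 0" and "(\<Sum>x\<in>UNIV. q x) = 1"
  shows "q x \<le> 1"
  using member_le_sum[of x UNIV q] assms by simp

lemma prob_le_half_if_dominated:
  fixes q :: "'a::finite \<Rightarrow> real"
  assumes nonneg: "\<And>x. q x \<ge> 0" and sum_one: "(\<Sum>x\<in>UNIV. q x) = 1"
    and "x \<noteq> y" and "q x \<le> q y"
  shows "q x \<le> 1 / 2"
proof -
  have "sum q {x, y} \<le> sum q UNIV"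
    by (rule sum_mono2) (auto simp: nonneg)
  with assms show ?thesis by simp
qed

lemma sum_neg_ln_ge:
  fixes q :: "nat \<Rightarrow> real"
  assumes "b0 < n"
    and pos: "\<And>b. b < n \<Longrightarrow> q b > 0"
    and le_one: "q b0 \<le> 1"
    and le_half: "\<And>b. b < n \<Longrightarrow> b \<noteq> b0 \<Longrightarrow> q b \<le> 1 / 2"
  shows "(\<Sum>b<n. - ln (q b)) \<ge> (real n - 1) * ln 2"
proof -
  have "(real n - 1) * ln 2 = (\<Sum>b\<in>{..<n} - {b0}. ln (2::real))"
    using \<open>b0 < n\<close> by (simp add: of_nat_diff)
  also have "\<dots> \<le> (\<Sum>b\<in>{..<n} - {b0}. - ln (q b))"
  proof (rule sum_mono)
    fix b assume "b \<in> {..<n} - {b0}"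
    then have "ln (q b) \<le> ln (1 / 2)"
      using le_half pos by simp
    then show "ln 2 \<le> - ln (q b)" by (simp add: ln_div)
  qed
  also have "\<dots> \<le> (\<Sum>b\<in>{..<n} - {b0}. - ln (q b)) - ln (q b0)"
    using le_one pos[OF \<open>b0 < n\<close>] by simp
  also have "\<dots> = (\<Sum>b<n. - ln (q b))"
    using \<open>b0 < n\<close> by (simp add: sum_diff1)
  finally show ?thesis .
qed

lemma exp_mean_ge_powr:
  fixes s :: real
  assumes "n \<ge> 1" and "s \<ge> (real n - 1) * ln 2"
  shows "exp (s / real n) \<ge> 2 powr ((real n - 1) / real n)"
proof -
  have "2 powr ((real n - 1) / real n) = exp ((real n - 1) * ln 2 / real n)"
    by (simp add: powr_def)
  also have "\<dots> \<le> exp (s / real n)"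
    using assms by (simp add: divide_right_mono)
  finally show ?thesis .
qed

theorem theorem7p2:
  fixes P :: "'v::finite \<Rightarrow> real"
    and t1 :: 'v
    and n :: nat
    and bucket :: "'v \<Rightarrow> nat"
    and tstar :: "nat \<Rightarrow> 'v"
    and Q :: "nat \<Rightarrow> 'v \<Rightarrow> real"
  assumes P_nonneg: "\<And>t. P t \<ge> 0"
    and P_sum: "(\<Sum>t\<in>UNIV. P t) = 1"
    and t1_top: "\<And>t. P t \<le> P t1"
    and n_pos: "n \<ge> 1"
    and bucket_range: "\<And>t. bucket t < n"
    and bucket_nonempty: "\<And>b. b < n \<Longrightarrow> \<exists>t. bucket t = b"
    and tstar_in: "\<And>b. b < n \<Longrightarrow> bucket (tstar b) = b"
    and tstar_max: "\<And>b t. b < n \<Longrightarrow> bucket t = b \<Longrightarrow> P t \<le> P (tstar b)"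
    and Q_nonneg: "\<And>b t. b < n \<Longrightarrow> Q b t \<ge> 0"
    and Q_sum: "\<And>b. b < n \<Longrightarrow> (\<Sum>t\<in>UNIV. Q b t) = 1"
    and Q_argmax: "\<And>b t. b < n \<Longrightarrow> Q b t \<le> Q b (tstar b)"
  shows "PPL n Q t1 \<ge> ereal (2 powr ((real n - 1) / real n))"
proof (cases "\<exists>b<n. Q b t1 = 0")
  case True
  then show ?thesis by (simp add: PPL_def)
next
  case False
  have pos: "Q b t1 > 0" if "b < n" for b
    using False Q_nonneg[OF that, of t1] that by force
  have le_half: "Q b t1 \<le> 1 / 2" if "b < n" "b \<noteq> bucket t1" for b
  proof (rule prob_le_half_if_dominated[OF Q_nonneg Q_sum _ Q_argmax])
    show "t1 \<noteq> tstar b" using tstar_in that by metis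
  qed (use that in auto)
  have t1_bucket: "bucket t1 < n" by (rule bucket_range)
  have "(\<Sum>b<n. - ln (Q b t1)) \<ge> (real n - 1) * ln 2"
    by (rule sum_neg_ln_ge[where q = "\<lambda>b. Q b t1", OF t1_bucket pos
          prob_le_one[OF Q_nonneg[OF t1_bucket] Q_sum[OF t1_bucket]] le_half])
  then show ?thesis
    using False exp_mean_ge_powr[OF n_pos] by (simp add: PPL_def)
qed

end
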